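(* For $n\ge 6$ consider partitions of $n$ with parts $q_1\ge q_2\ge\dots\ge q_h$ such that $h\ge 4$, $q_j-q_{j+1}\in\{0,1\}$ for all $1\le j<h$, $q_1=q_2$, and $q_{h-2}=3$, $q_{h-1}=2$, $q_h=1$. Let $e'(n)$ (resp. $o'(n)$) be the number of such partitions with an even (resp. odd) number $h$ of parts. For an integer $t$ put $P_1(t)=\tfrac12(3t^2+t+4)$, $P_2(t)=\tfrac12(3(t+1)^2-t-1)$, $P_3(t)=\tfrac12(3(t+1)^2-t+3)$, $P_4(t)=\tfrac12(3(t+1)^2+t+1)$. Then for every integer $n\ge 6$: (a) $e'(n)=o'(n)$ if $n\notin\{P_1(t),P_2(t),P_3(t),P_4(t)\}$ for every integer $t\ge 2$; (b) $e'(n)=o'(n)+1$ if $n=P_1(t)$ or $n=P_4(t)$ for some integer $t\ge 2$; (c) $e'(n)=o'(n)-1$ if $n=P_2(t)$ or $n=P_3(t)$ for some integer $t\ge 2$. *)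

theory Defs
  imports Main
begin

text \<open>A partition is represented by the list q = [q_1, ..., q_h] of its parts
(index j in the list corresponds to q_(j+1)).  Consecutive differences in {0,1}
make the list weakly decreasing, and q_h = 1 makes all parts positive.\<close>

definition good_partition :: "nat \<Rightarrow> nat list \<Rightarrow> bool" where
  "good_partition n q \<longleftrightarrow>
     sum_list q = n \<and> length q \<ge> 4 \<and>
     (\<forall>j. j + 1 < length q \<longrightarrow> q ! j - q ! (j+1) \<in> {0,1} \<and> q ! j \<ge> q ! (j+1)) \<and>
     q ! 0 = q ! 1 \<and>
     q ! (length q - 3) = 3 \<and> q ! (length q - 2) = 2 \<and> q ! (length q - 1) = 1"

definition e' :: "nat \<Rightarrow> nat" where
  "e' n = card {q. good_partition n q \<and> even (length q)}"

definition o' :: "nat \<Rightarrow> nat" where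
  "o' n = card {q. good_partition n q \<and> odd (length q)}"

text \<open>The numerators below are always even, so div 2 is exact division.\<close>
definition P1 :: "int \<Rightarrow> int" where "P1 t = (3*t^2 + t + 4) div 2"
definition P2 :: "int \<Rightarrow> int" where "P2 t = (3*(t+1)^2 - t - 1) div 2"
definition P3 :: "int \<Rightarrow> int" where "P3 t = (3*(t+1)^2 - t + 3) div 2"
definition P4 :: "int \<Rightarrow> int" where "P4 t = (3*(t+1)^2 + t + 1) div 2"

end

theory Submission
  imports Defs "HOL-Library.Disjoint_Sets"
begin

text \<open>
  A partition whose consecutive parts differ by at most one and whose smallest part is 1 is
  determined by its multiplicity list c, where c ! i \<ge> 1 is the multiplicity of the part i + 1.
  Its size is the weight \<Sum> (i + 1) c ! i, its number of parts is sum_list c, and the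
  conditions of the theorem become c ! 0 = c ! 1 = 1 and last c \<ge> 2.

  Lowering the two largest parts by one maps the lists with last c = 2 and length at least 4
  bijectively onto the lists of size n - 2 with last c \<ge> 3; the remaining list with
  last c = 2 is [1, 1, 2], of size 9. Through conjugation, a list with last c \<ge> 3 is a
  partition into distinct parts, and Franklin's involution pairs these with opposite signs,
  except for the lists of k ones followed by k + 2 or by k + 1, of sizes P4 k and P2 k. Hence
  e'(n) - o'(n) counts positively the representations n = P4 t, n = P4 t + 2 = P1 (t + 1) and
  n = 9 = P1 2, and negatively n = P2 t and n = P2 t + 2 = P3 t. Finally, the four values at t
  lie in the block (P4 (t - 1), P4 t] in strictly increasing order P1, P2, P3, P4, so n has at
  most one such representation.
\<close>

section \<open>Multiplicity lists\<close>

definition weight :: "nat list \<Rightarrow> nat" where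
  "weight c = (\<Sum>i<length c. Suc i * c ! i)"

text \<open>expand c is the partition, listed in decreasing order, with c ! i parts equal to i + 1.\<close>

fun expand :: "nat list \<Rightarrow> nat list" where
  "expand [] = []"
| "expand (x # xs) = map Suc (expand xs) @ replicate x 1"

abbreviation gapless :: "nat list \<Rightarrow> bool" where
  "gapless \<equiv> successively (\<lambda>a b. b \<le> a \<and> a \<le> Suc b)"

lemma weight_Nil [simp]: "weight [] = 0"
  by (simp add: weight_def)

lemma weight_Cons: "weight (x # xs) = x + weight xs + sum_list xs"
proof -
  have "weight (x # xs) = x + (\<Sum>i<length xs. Suc (Suc i) * xs ! i)"
    unfolding weight_def length_Cons sum.lessThan_Suc_shift by simp
  also have "\<dots> = x + weight xs + (\<Sum>i<length xs. xs ! i)"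
    by (simp add: weight_def sum.distrib)
  finally show ?thesis
    by (simp add: sum_list_sum_nth atLeast0LessThan)
qed

lemma weight_snoc: "weight (c @ [x]) = weight c + Suc (length c) * x"
  by (simp add: weight_def nth_append)

lemma weight_map_upt: "weight (map f [0..<k]) = (\<Sum>i<k. Suc i * f i)"
  by (simp add: weight_def)

lemma weight_split_last:
  "c \<noteq> [] \<Longrightarrow> weight c = (\<Sum>i<length c - 1. Suc i * c ! i) + length c * last c"
  by (cases c rule: rev_cases) (simp_all add: weight_def nth_append)

lemma sum_list_split_last:
  "c \<noteq> [] \<Longrightarrow> sum_list (c::nat list) = (\<Sum>i<length c - 1. c ! i) + last c"
  by (cases c rule: rev_cases) (simp_all add: sum_list_sum_nth atLeast0LessThan nth_append)

lemma nth_pos: "0 \<notin> set c \<Longrightarrow> i < length c \<Longrightarrow> 0 < (c ! i :: nat)"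
  by (metis gr0I nth_mem)

lemma zero_notin_setI: "(\<And>i. i < length c \<Longrightarrow> 0 < (c ! i :: nat)) \<Longrightarrow> 0 \<notin> set c"
  by (metis in_set_conv_nth less_irrefl)

lemma length_expand: "length (expand c) = sum_list c"
  by (induction c) auto

lemma sum_list_expand: "sum_list (expand c) = weight c"
  by (induction c) (auto simp: length_expand weight_Cons sum_list_Suc sum_list_replicate)

lemma expand_snoc: "expand (c @ [y]) = replicate y (Suc (length c)) @ expand c"
  by (induction c) (auto simp: map_replicate)

lemma set_expand: "set (expand c) \<subseteq> {1..length c}"
  by (induction c) auto

lemma count_list_replicate: "count_list (replicate k a) a = k"
  by (induction k) auto

lemma expand_eq_Nil_iff: "0 \<notin> set c \<Longrightarrow> expand c = [] \<longleftrightarrow> c = []"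
  by (cases c) (auto simp flip: length_0_conv simp: length_expand)

lemma count_list_expand: "i < length c \<Longrightarrow> count_list (expand c) (Suc i) = c ! i"
proof (induction c arbitrary: i)
  case (Cons x xs)
  have "1 \<notin> set (map Suc (expand xs))" "0 \<notin> set (expand xs)"
    using set_expand[of xs] by auto
  then show ?case
    using Cons by (cases i) (auto simp: count_list_map_conv count_list_0_iff count_list_replicate)
qed simp

lemma successively_replicate: "P a a \<Longrightarrow> successively P (replicate k a)"
proof (induction k)
  case (Suc k)
  then show ?case by (cases k) auto
qed simp

lemma expand_gapless:
  "0 \<notin> set c \<Longrightarrow> c \<noteq> [] \<Longrightarrow>
     gapless (expand c) \<and> hd (expand c) = length c \<and> last (expand c) = 1"
proof (induction c)
  case (Cons x xs)
  have x: "x \<noteq> 0" using Cons.prems by auto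
  show ?case
  proof (cases "xs = []")
    case True
    then show ?thesis using x by (simp add: successively_replicate)
  next
    case False
    then have IH: "gapless (expand xs)" "hd (expand xs) = length xs" "last (expand xs) = 1"
      and ne: "expand xs \<noteq> []"
      using Cons by (auto simp: expand_eq_Nil_iff)
    have "gapless (map Suc (expand xs) @ replicate x 1)"
      using IH ne x by (simp add: successively_append_iff successively_map successively_replicate last_map)
    then show ?thesis using IH ne x by (simp add: hd_map)
  qed
qed simp

lemma gapless_expand_surj:
  "gapless q \<Longrightarrow> q \<noteq> [] \<Longrightarrow> last q = 1 \<Longrightarrow> \<exists>c. 0 \<notin> set c \<and> expand c = q"
proof (induction q)
  case (Cons x q)
  show ?case
  proof (cases "q = []")
    case True
    then have "x = 1" using Cons.prems by simp
    then show ?thesis using True by (intro exI[of _ "[1]"]) simp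
  next
    case False
    with Cons.prems have "gapless q" "last q = 1" and step: "hd q \<le> x" "x \<le> Suc (hd q)"
      by (auto simp: successively_Cons)
    then obtain c where c: "0 \<notin> set c" "expand c = q"
      using Cons.IH False by blast
    with False have "c \<noteq> []" by auto
    then have "hd q = length c" using expand_gapless c by auto
    with step consider "x = Suc (length c)" | "x = length c" by linarith
    then show ?thesis
    proof cases
      case 1
      then have "expand (c @ [1]) = x # q" using c by (simp add: expand_snoc)
      then show ?thesis using c by (intro exI[of _ "c @ [1]"]) auto
    next
      case 2
      obtain b y where b: "c = b @ [y]" using \<open>c \<noteq> []\<close> by (cases c rule: rev_cases) auto
      then have "expand (b @ [Suc y]) = x # q" using c 2 by (simp add: expand_snoc)
      then show ?thesis using c b by (intro exI[of _ "b @ [Suc y]"]) auto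
    qed
  qed
qed simp

lemma inj_on_expand: "inj_on expand {c. 0 \<notin> set c}"
proof (rule inj_onI)
  fix c d assume c: "c \<in> {c. 0 \<notin> set c}" and d: "d \<in> {c. 0 \<notin> set c}"
    and eq: "expand c = expand d"
  show "c = d"
  proof (cases "c = []")
    case True
    then show ?thesis using eq d expand_eq_Nil_iff[of d] by auto
  next
    case False
    then have "d \<noteq> []" using eq c d by (auto simp: expand_eq_Nil_iff)
    then have len: "length c = length d"
      using expand_gapless[of c] expand_gapless[of d] c d False eq by auto
    show ?thesis
      by (rule nth_equalityI) (use len eq in \<open>auto simp flip: count_list_expand\<close>)
  qed
qed

lemma good_partition_iff:
  "good_partition n q \<longleftrightarrow>
     sum_list q = n \<and> 4 \<le> length q \<and> gapless q \<and> q ! 0 = q ! 1 \<and> (\<exists>p. q = p @ [3, 2, 1])"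
proof -
  have step: "(a - b \<in> {0, 1} \<and> b \<le> a) \<longleftrightarrow> b \<le> a \<and> a \<le> Suc b" for a b :: nat
    by auto
  have suffix: "(q ! (length q - 3) = 3 \<and> q ! (length q - 2) = 2 \<and> q ! (length q - 1) = 1)
      \<longleftrightarrow> (\<exists>p. q = p @ [3, 2, 1])" if "3 \<le> length q"
  proof -
    have three: "\<exists>a b d. xs = [a, b, d]" if "length xs = 3" for xs :: "nat list"
      using that by (auto simp: numeral_3_eq_3 length_Suc_conv)
    have "length (drop (length q - 3) q) = 3" using that by simp
    then obtain a b d where "drop (length q - 3) q = [a, b, d]"
      using three by blast
    then have "q = take (length q - 3) q @ [a, b, d]"
      by (metis append_take_drop_id)
    then obtain p where "q = p @ [a, b, d]" by blast
    then show ?thesis by (auto simp: nth_append)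
  qed
  have "good_partition n q \<longleftrightarrow> sum_list q = n \<and> 4 \<le> length q \<and> gapless q \<and> q ! 0 = q ! 1 \<and>
      (q ! (length q - 3) = 3 \<and> q ! (length q - 2) = 2 \<and> q ! (length q - 1) = 1)"
    unfolding good_partition_def successively_conv_nth step by auto
  moreover have "3 \<le> length q" if "4 \<le> length q" using that by simp
  ultimately show ?thesis using suffix by blast
qed

lemma gapless_sorted: "gapless q \<Longrightarrow> sorted_wrt (\<ge>) q"
proof -
  have "transp ((\<ge>) :: nat \<Rightarrow> nat \<Rightarrow> bool)" by (auto intro: transpI)
  moreover assume "gapless q"
  then have "successively (\<ge>) q" by (rule successively_mono) simp
  ultimately show ?thesis by (simp add: successively_conv_sorted_wrt)
qed

definition good_mults :: "nat \<Rightarrow> nat list set" where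
  "good_mults n =
     {c. 3 \<le> length c \<and> c ! 0 = 1 \<and> c ! 1 = 1 \<and> 0 \<notin> set c \<and> 2 \<le> last c \<and> weight c = n}"

lemma good_mults_Cons:
  assumes "c \<in> good_mults n"
  obtains d where "c = 1 # 1 # d" "d \<noteq> []" "0 \<notin> set d" "2 \<le> last d"
proof -
  have c: "3 \<le> length c" "c ! 0 = 1" "c ! 1 = 1" "0 \<notin> set c" "2 \<le> last c"
    using assms by (auto simp: good_mults_def)
  then obtain a b d where "c = a # b # d" "d \<noteq> []"
    by (auto simp: numeral_3_eq_3 Suc_le_length_iff)
  with c show ?thesis using that by auto
qed

lemma expand_good_mults:
  assumes c: "c \<in> good_mults n"
  shows "good_partition n (expand c)"
proof -
  obtain d where d: "c = 1 # 1 # d" "d \<noteq> []" "0 \<notin> set d" "2 \<le> last d"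
    using good_mults_Cons[OF c] .
  have "last d \<le> sum_list d" using d by (simp add: member_le_sum_list)
  then have len_d: "2 \<le> length (expand d)" using d by (simp add: length_expand)
  moreover obtain E where E: "expand d = E @ [1]"
    using expand_gapless[of d] d by (metis append_butlast_last_id expand_eq_Nil_iff)
  ultimately have "E \<noteq> []" by auto
  have suffix: "expand c = map (Suc \<circ> Suc) E @ [3, 2, 1]" using d E by simp
  have "c \<noteq> []" using d by simp
  have "expand c = replicate (last c) (length c) @ expand (butlast c)"
    using expand_snoc[of "butlast c" "last c"] d by simp
  then have "expand c ! 0 = expand c ! 1" using d by (simp add: nth_append)
  moreover have "gapless (expand c)" "sum_list (expand c) = n"
    using expand_gapless[of c] c \<open>c \<noteq> []\<close> by (auto simp: sum_list_expand good_mults_def)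
  moreover have "4 \<le> length (expand c)" using suffix \<open>E \<noteq> []\<close> by (cases E) auto
  ultimately show ?thesis using suffix by (auto simp: good_partition_iff)
qed

lemma good_partition_expand:
  assumes "good_partition n q"
  shows "\<exists>c\<in>good_mults n. q = expand c"
proof -
  obtain p where q: "sum_list q = n" "4 \<le> length q" "gapless q" "q ! 0 = q ! 1"
    and p: "q = p @ [3, 2, 1]"
    using assms by (auto simp: good_partition_iff)
  obtain c where c: "0 \<notin> set c" "expand c = q"
    using gapless_expand_surj[OF q(3)] p by auto
  then have "c \<noteq> []" using q(2) by auto
  have p3: "\<forall>x\<in>set p. 3 \<le> x"
    using gapless_sorted[OF q(3)] by (simp add: p sorted_wrt_append)
  have "3 \<in> set (expand c)" using c p by simp
  then have len: "3 \<le> length c" using set_expand[of c] by auto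
  have count: "c ! i = count_list q (Suc i)" if "i < length c" for i
    using count_list_expand[OF that] c(2) by simp
  have "1 \<notin> set p" "2 \<notin> set p" using p3 by auto
  then have c01: "c ! 0 = 1" "c ! 1 = 1"
    using count[of 0] count[of 1] len p \<open>c \<noteq> []\<close> by (simp_all add: numeral_2_eq_2)
  obtain a b r where qr: "q = a # b # r" using q(2)
    by (auto simp: numeral_eq_Suc Suc_le_length_iff)
  then have "a = length c" "a = b"
    using expand_gapless[of c] c \<open>c \<noteq> []\<close> q(4) by auto
  then have "2 \<le> count_list q (length c)" using qr by simp
  moreover have "last c = count_list q (length c)"
    using count[of "length c - 1"] \<open>c \<noteq> []\<close> by (simp add: last_conv_nth)
  ultimately have "2 \<le> last c" by simp
  moreover have "weight c = n" using sum_list_expand[of c] c(2) q(1) by simp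
  ultimately show ?thesis using len c01 c by (auto simp: good_mults_def)
qed

lemma good_partitions_eq_expand_image: "{q. good_partition n q} = expand ` good_mults n"
  using expand_good_mults good_partition_expand by blast

lemma sum_list_le_weight: "sum_list c \<le> weight c"
  unfolding weight_def sum_list_sum_nth atLeast0LessThan by (rule sum_mono) simp

lemma length_le_sum_list: "0 \<notin> set c \<Longrightarrow> length c \<le> sum_list c"
  by (induction c) auto

lemma finite_good_mults: "finite (good_mults n)"
proof (rule finite_subset)
  show "good_mults n \<subseteq> {c. set c \<subseteq> {0..n} \<and> length c \<le> n}"
  proof safe
    fix c assume c: "c \<in> good_mults n"
    have "length c \<le> sum_list c"
      using c by (intro length_le_sum_list) (simp add: good_mults_def)
    then show "length c \<le> n" using sum_list_le_weight[of c] c by (simp add: good_mults_def)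
    fix x assume "x \<in> set c"
    then show "x \<in> {0..n}"
      using member_le_sum_list[of x c] sum_list_le_weight[of c] c by (simp add: good_mults_def)
  qed
qed (rule finite_lists_length_le[OF finite_atLeastAtMost])

definition signed_card :: "nat list set \<Rightarrow> int" where
  "signed_card A = (\<Sum>c\<in>A. (-1) ^ sum_list c)"

lemma sum_neg_one_power:
  assumes "finite A"
  shows "(\<Sum>x\<in>A. (-1::int) ^ f x) = int (card {x\<in>A. even (f x)}) - int (card {x\<in>A. odd (f x)})"
proof -
  have "(\<Sum>x\<in>A. (-1::int) ^ f x) = (\<Sum>x\<in>A. if even (f x) then 1 else -1)"
    by (rule sum.cong) auto
  also have "\<dots> = int (card {x\<in>A. even (f x)}) - int (card {x\<in>A. odd (f x)})"
    using assms by (simp add: sum.If_cases Int_def conj_commute)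
  finally show ?thesis .
qed

lemma e'_minus_o'_eq_signed_card: "int (e' n) - int (o' n) = signed_card (good_mults n)"
proof -
  have inj: "inj_on expand (good_mults n)"
    by (rule inj_on_subset[OF inj_on_expand]) (auto simp: good_mults_def)
  let ?S = "{q. good_partition n q}"
  have "int (e' n) - int (o' n) = int (card {q\<in>?S. even (length q)}) - int (card {q\<in>?S. odd (length q)})"
    by (simp add: e'_def o'_def)
  also have "\<dots> = (\<Sum>q\<in>expand ` good_mults n. (-1) ^ length q)"
    unfolding good_partitions_eq_expand_image
    by (simp add: sum_neg_one_power finite_good_mults)
  also have "\<dots> = signed_card (good_mults n)"
    by (simp add: sum.reindex[OF inj] signed_card_def length_expand)
  finally show ?thesis .
qed

section \<open>Franklin's involution\<close>

definition staircase :: "nat list \<Rightarrow> nat" where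
  "staircase c = min (length c) (Suc (length (takeWhile (\<lambda>x. x = 1) c)))"

lemma staircase_le_length: "staircase c \<le> length c"
  by (simp add: staircase_def)

lemma nth_less_staircase: "Suc i < staircase c \<Longrightarrow> c ! i = 1"
proof -
  assume "Suc i < staircase c"
  then have i: "i < length (takeWhile (\<lambda>x. x = 1) c)" by (simp add: staircase_def)
  then have "takeWhile (\<lambda>x. x = 1) c ! i \<in> set (takeWhile (\<lambda>x. x = 1) c)" by (rule nth_mem)
  then show "c ! i = 1" using takeWhile_nth[OF i] by (auto dest: set_takeWhileD)
qed

lemma nth_staircase: "staircase c < length c \<Longrightarrow> c ! (staircase c - 1) \<noteq> 1"
  using nth_length_takeWhile[of "\<lambda>x. x = 1" c] by (simp add: staircase_def)

lemma le_staircase: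
  assumes "k \<le> length c" "\<And>i. Suc i < k \<Longrightarrow> c ! i = 1"
  shows "k \<le> staircase c"
proof -
  have "k - 1 \<le> length (takeWhile (\<lambda>x. x = 1) c)"
    by (rule length_takeWhile_less_P_nth) (use assms in auto)
  then show ?thesis using assms(1) by (simp add: staircase_def)
qed

lemma staircase_eqI:
  assumes "0 < k" "k \<le> length c" "\<And>i. Suc i < k \<Longrightarrow> c ! i = 1"
    and "k = length c \<or> c ! (k - 1) \<noteq> 1"
  shows "staircase c = k"
proof (rule antisym)
  show "k \<le> staircase c" using assms(2,3) by (rule le_staircase)
  show "staircase c \<le> k"
  proof (rule ccontr)
    assume "\<not> staircase c \<le> k"
    then have "c ! (k - 1) = 1" "k < length c"
      using nth_less_staircase[of "k - 1" c] assms(1) staircase_le_length[of c] by auto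
    then show False using assms(4) by simp
  qed
qed

text \<open>
  The conjugate of expand c is the partition into distinct parts whose smallest part is last c
  and whose largest staircase c parts are consecutive integers (a maximal such run).
  move_smallest deletes the smallest part and adds 1 to each of the last c largest parts;
  move_staircase subtracts 1 from each part of the run and adds a new smallest part equal to
  the length of the run.
  These are Franklin's two moves, and sum_list c, the largest conjugate part, changes by one.
\<close>

definition move_smallest :: "nat list \<Rightarrow> nat list" where
  "move_smallest c = map (\<lambda>i. c ! i + (if i = length c - 2 then last c else 0)
                                     + (if i = last c - 1 then 1 else 0)) [0..<length c - 1]"

definition move_staircase :: "nat list \<Rightarrow> nat list" where
  "move_staircase c = map (\<lambda>i. c ! i - (if i = staircase c - 1 then 1 else 0)
                                     - (if i = length c - 1 then staircase c else 0)) [0..<length c]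
                      @ [staircase c]"

definition franklin :: "nat list \<Rightarrow> nat list" where
  "franklin c =
    (let m = length c; s = last c; r = staircase c in
     if r = m \<and> (s = m \<or> s = Suc m) then c
     else if s \<le> r then move_smallest c else move_staircase c)"

lemma length_move_smallest [simp]: "length (move_smallest c) = length c - 1"
  by (simp add: move_smallest_def)

lemma nth_move_smallest:
  "i < length c - 1 \<Longrightarrow> move_smallest c ! i =
     c ! i + (if i = length c - 2 then last c else 0) + (if i = last c - 1 then 1 else 0)"
  by (simp add: move_smallest_def)

lemma length_move_staircase [simp]: "length (move_staircase c) = Suc (length c)"
  by (simp add: move_staircase_def)

lemma nth_move_staircase:
  "i < length c \<Longrightarrow> move_staircase c ! i =
     c ! i - (if i = staircase c - 1 then 1 else 0) - (if i = length c - 1 then staircase c else 0)"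
  by (simp add: move_staircase_def nth_append)

lemma last_move_staircase [simp]: "last (move_staircase c) = staircase c"
  by (simp add: move_staircase_def)

lemma weight_move_smallest:
  assumes "0 < last c" "last c < length c"
  shows "weight (move_smallest c) = weight c"
proof -
  define m s where "m = length c" and "s = last c"
  have ms: "m - 2 < m - 1" "s - 1 < m - 1" "Suc (m - 2) = m - 1" "Suc (s - 1) = s"
    using assms by (auto simp: m_def s_def)
  have "weight (move_smallest c) =
      (\<Sum>i<m - 1. Suc i * (c ! i + (if i = m - 2 then s else 0) + (if i = s - 1 then 1 else 0)))"
    unfolding m_def s_def by (simp add: move_smallest_def weight_map_upt)
  also have "\<dots> = (\<Sum>i<m - 1. Suc i * c ! i)
      + (\<Sum>i<m - 1. Suc i * (if i = m - 2 then s else 0)) + (\<Sum>i<m - 1. Suc i * (if i = s - 1 then 1 else 0))"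
    by (simp only: distrib_left sum.distrib)
  also have "\<dots> = (\<Sum>i<m - 1. Suc i * c ! i) + (m - 1) * s + s"
    using ms by (simp add: if_distrib sum.delta cong: if_cong)
  also have "\<dots> = weight c"
  proof -
    have "c \<noteq> []" "(m - 1) * s + s = m * s" using assms by (auto simp: m_def s_def mult_eq_if)
    then show ?thesis using weight_split_last[of c] by (simp add: m_def s_def)
  qed
  finally show ?thesis .
qed

lemma sum_list_move_smallest:
  assumes "0 < last c" "last c < length c"
  shows "sum_list (move_smallest c) = Suc (sum_list c)"
proof -
  define m s where "m = length c" and "s = last c"
  have ms: "m - 2 < m - 1" "s - 1 < m - 1"
    using assms by (auto simp: m_def s_def)
  have "sum_list (move_smallest c) =
      (\<Sum>i<m - 1. c ! i + (if i = m - 2 then s else 0) + (if i = s - 1 then 1 else 0))"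
    unfolding m_def s_def
    by (simp add: move_smallest_def sum_set_upt_conv_sum_list_nat[symmetric] atLeast0LessThan)
  also have "\<dots> = (\<Sum>i<m - 1. c ! i) + s + 1"
    using ms by (simp add: sum.distrib)
  also have "\<dots> = Suc (sum_list c)"
    using assms sum_list_split_last[of c] by (cases c) (auto simp: m_def s_def)
  finally show ?thesis .
qed

lemma last_move_smallest:
  "2 \<le> length c \<Longrightarrow> last (move_smallest c) =
     c ! (length c - 2) + last c + (if length c - 2 = last c - 1 then 1 else 0)"
  by (simp add: move_smallest_def last_map numeral_2_eq_2 Suc_diff_Suc)

lemma staircase_move_smallest:
  assumes "0 \<notin> set c" "0 < last c" "last c < length c" "\<And>i. Suc i < last c \<Longrightarrow> c ! i = 1"
  shows "staircase (move_smallest c) = last c"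
proof (rule staircase_eqI)
  show "0 < last c" "last c \<le> length (move_smallest c)" using assms by auto
  show "move_smallest c ! i = 1" if "Suc i < last c" for i
    using that assms(3,4) by (auto simp: nth_move_smallest numeral_2_eq_2)
  have "c ! (last c - 1) \<noteq> 0" using nth_pos[OF assms(1), of "last c - 1"] assms(2,3) by simp
  then show "last c = length (move_smallest c) \<or> move_smallest c ! (last c - 1) \<noteq> 1"
    using assms(2,3) by (simp add: nth_move_smallest)
qed

lemma move_staircase_move_smallest:
  assumes "0 < last c" "last c < length c" "staircase (move_smallest c) = last c"
  shows "move_staircase (move_smallest c) = c"
proof (rule nth_equalityI)
  show "length (move_staircase (move_smallest c)) = length c" using assms by simp
  fix i assume "i < length (move_staircase (move_smallest c))"
  then consider "i < length c - 1" | "i = length c - 1" using assms by fastforce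
  then show "move_staircase (move_smallest c) ! i = c ! i"
  proof cases
    case 1
    then show ?thesis using assms by (simp add: nth_move_staircase nth_move_smallest numeral_2_eq_2)
  next
    case 2
    have "c \<noteq> []" using assms by auto
    then show ?thesis using 2 assms
      by (simp add: move_staircase_def nth_append last_conv_nth)
  qed
qed

lemma move_smallest_move_staircase:
  assumes "0 < staircase c" "0 < c ! (staircase c - 1)"
    and "staircase c + (if staircase c = length c then 1 else 0) \<le> last c"
  shows "move_smallest (move_staircase c) = c"
proof (rule nth_equalityI)
  show "length (move_smallest (move_staircase c)) = length c" by simp
  have r: "staircase c \<le> length c" by (rule staircase_le_length)
  fix i assume "i < length (move_smallest (move_staircase c))"
  then have i: "i < length c" by simp
  have "c \<noteq> []" using assms(1) r by auto
  then have "last c = c ! (length c - 1)" by (simp add: last_conv_nth)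
  then show "move_smallest (move_staircase c) ! i = c ! i"
    using i assms r by (cases "staircase c = length c") (auto simp: nth_move_smallest nth_move_staircase)
qed

definition core_mults :: "nat \<Rightarrow> nat list set" where
  "core_mults n = {c \<in> good_mults n. 3 \<le> last c}"

lemma core_mults_iff:
  "c \<in> core_mults n \<longleftrightarrow>
     3 \<le> length c \<and> c ! 0 = 1 \<and> c ! 1 = 1 \<and> 0 \<notin> set c \<and> 3 \<le> last c \<and> weight c = n"
  by (auto simp: core_mults_def good_mults_def)

lemma staircase_core_mults:
  assumes "c \<in> core_mults n"
  shows "3 \<le> staircase c"
proof (rule le_staircase)
  show "3 \<le> length c" using assms by (simp add: core_mults_iff)
  fix i assume "Suc i < 3"
  then have "i = 0 \<or> i = 1" by auto
  then show "c ! i = 1" using assms by (auto simp: core_mults_iff)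
qed

lemma move_smallest_core_mults:
  assumes c: "c \<in> core_mults n" and sr: "last c \<le> staircase c"
    and nf: "\<not> (staircase c = length c \<and> last c = length c)"
  shows "move_smallest c \<in> core_mults n" "sum_list (move_smallest c) = Suc (sum_list c)"
    "franklin (move_smallest c) = c"
proof -
  let ?c' = "move_smallest c"
  have c3: "3 \<le> length c" "c ! 0 = 1" "c ! 1 = 1" "0 \<notin> set c" "3 \<le> last c" "weight c = n"
    using c by (auto simp: core_mults_iff)
  have lt: "last c < length c"
    using sr nf staircase_le_length[of c] by linarith
  have ones: "c ! i = 1" if "Suc i < last c" for i
    using that sr nth_less_staircase by (meson less_le_trans)
  have r': "staircase ?c' = last c"
    by (rule staircase_move_smallest) (use c3 lt ones in auto)
  have "0 < c ! (length c - 2)" using c3 by (intro nth_pos) auto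
  moreover have "last ?c' = c ! (length c - 2) + last c + (if length c - 2 = last c - 1 then 1 else 0)"
    using c3 by (intro last_move_smallest) simp
  ultimately have last': "last c < last ?c'" "staircase ?c' = length ?c' \<Longrightarrow> Suc (length ?c') < last ?c'"
    using r' c3 by auto
  have "0 < ?c' ! i" if "i < length ?c'" for i
    using nth_pos[OF c3(4), of i] that by (simp add: nth_move_smallest)
  then have "0 \<notin> set ?c'" by (rule zero_notin_setI)
  moreover have "?c' ! 0 = 1" "?c' ! 1 = 1"
    using c3 lt by (auto simp: nth_move_smallest)
  moreover have "weight ?c' = n" using c3 lt by (simp add: weight_move_smallest)
  ultimately show "?c' \<in> core_mults n" using c3 lt last' by (auto simp: core_mults_iff)
  show "sum_list ?c' = Suc (sum_list c)" using c3 lt by (simp add: sum_list_move_smallest)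
  have "franklin ?c' = move_staircase ?c'"
    using r' last' by (auto simp: franklin_def Let_def)
  also have "\<dots> = c" using c3 lt r' by (simp add: move_staircase_move_smallest)
  finally show "franklin ?c' = c" .
qed

lemma zero_notin_set_move_staircase:
  assumes "0 \<notin> set c" "0 < staircase c" "staircase c < last c"
    and "\<not> (staircase c = length c \<and> last c = Suc (length c))"
  shows "0 \<notin> set (move_staircase c)"
proof (rule zero_notin_setI)
  let ?r = "staircase c"
  fix i assume i: "i < length (move_staircase c)"
  have rm: "?r \<le> length c" by (rule staircase_le_length)
  then have "c \<noteq> []" using assms(2) by auto
  then have last_c: "last c = c ! (length c - 1)" by (rule last_conv_nth)
  show "0 < move_staircase c ! i"
  proof (cases "i < length c")
    case True
    have "0 < c ! i" "0 < c ! (?r - 1)" using assms(1,2) True rm by (auto intro: nth_pos)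
    moreover have "c ! (?r - 1) \<noteq> 1" if "?r < length c" using that by (rule nth_staircase)
    ultimately show ?thesis using True assms(2-4) rm last_c
      by (cases "?r < length c") (auto simp: nth_move_staircase)
  next
    case False
    then show ?thesis using i assms(2) by (simp add: move_staircase_def nth_append)
  qed
qed

lemma move_staircase_core_mults:
  assumes c: "c \<in> core_mults n" and rs: "staircase c < last c"
    and nf: "\<not> (staircase c = length c \<and> last c = Suc (length c))"
  shows "move_staircase c \<in> core_mults n" "Suc (sum_list (move_staircase c)) = sum_list c"
    "franklin (move_staircase c) = c"
proof -
  let ?c' = "move_staircase c" and ?r = "staircase c"
  have c3: "3 \<le> length c" "c ! 0 = 1" "c ! 1 = 1" "0 \<notin> set c" "3 \<le> last c" "weight c = n"
    using c by (auto simp: core_mults_iff)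
  have r3: "3 \<le> ?r" using c by (rule staircase_core_mults)
  have rm: "?r \<le> length c" by (rule staircase_le_length)
  have inv: "move_smallest ?c' = c"
    by (rule move_smallest_move_staircase) (use c3 r3 rs rm in \<open>auto intro: nth_pos\<close>)
  have "0 \<notin> set ?c'" using c3 r3 rs nf by (intro zero_notin_set_move_staircase) auto
  moreover have "?c' ! 0 = 1" "?c' ! 1 = 1"
  proof -
    have "0 < length c" "1 < length c" "1 \<noteq> ?r - 1" "1 \<noteq> length c - 1" using c3 r3 by linarith+
    then show "?c' ! 0 = 1" "?c' ! 1 = 1" using c3 r3 by (simp_all add: nth_move_staircase)
  qed
  moreover have "weight ?c' = n"
    using weight_move_smallest[of ?c'] inv r3 rm c3 by simp
  ultimately show "?c' \<in> core_mults n" using c3 r3 by (auto simp: core_mults_iff)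
  show "Suc (sum_list ?c') = sum_list c"
    using sum_list_move_smallest[of ?c'] inv r3 rm by simp
  have "?r \<le> staircase ?c'"
  proof (rule le_staircase)
    show "?r \<le> length ?c'" using rm by simp
    fix i assume "Suc i < ?r"
    then show "?c' ! i = 1" using rm nth_less_staircase[of i c] by (auto simp: nth_move_staircase)
  qed
  then have "franklin ?c' = move_smallest ?c'"
    using rm by (auto simp: franklin_def Let_def)
  then show "franklin ?c' = c" using inv by simp
qed

lemma franklin_core_mults:
  assumes c: "c \<in> core_mults n"
  shows "franklin c \<in> core_mults n" "franklin (franklin c) = c"
    "franklin c \<noteq> c \<Longrightarrow> (-1::int) ^ sum_list (franklin c) = - ((-1) ^ sum_list c)"
    "franklin c = c \<longleftrightarrow> staircase c = length c \<and> (last c = length c \<or> last c = Suc (length c))"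
proof -
  let ?fixed = "staircase c = length c \<and> (last c = length c \<or> last c = Suc (length c))"
  have "?fixed \<and> franklin c = c \<or> \<not> ?fixed \<and> franklin c \<in> core_mults n \<and> franklin (franklin c) = c
      \<and> (-1::int) ^ sum_list (franklin c) = - ((-1) ^ sum_list c)"
  proof (cases ?fixed)
    case True
    then show ?thesis by (simp add: franklin_def Let_def)
  next
    case False
    show ?thesis
    proof (cases "last c \<le> staircase c")
      case True
      then have "franklin c = move_smallest c" using False by (auto simp: franklin_def Let_def)
      then show ?thesis using move_smallest_core_mults[OF c True] False by simp
    next
      case stair: False
      then have "franklin c = move_staircase c" using False by (auto simp: franklin_def Let_def)
      moreover have "staircase c < last c" using stair by simp
      ultimately show ?thesis
        using move_staircase_core_mults[OF c] False by (simp flip: move_staircase_core_mults(2)[OF c])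
    qed
  qed
  then show "franklin c \<in> core_mults n" "franklin (franklin c) = c"
    "franklin c \<noteq> c \<Longrightarrow> (-1::int) ^ sum_list (franklin c) = - ((-1) ^ sum_list c)"
    "franklin c = c \<longleftrightarrow> ?fixed"
    using c by (auto simp: minus_equation_iff[of "(-1::int) ^ sum_list c"])
qed

lemma finite_core_mults: "finite (core_mults n)"
  using finite_good_mults by (simp add: core_mults_def)

lemma signed_card_core_mults_fixed:
  "signed_card (core_mults n) = signed_card {c \<in> core_mults n. franklin c = c}"
proof -
  let ?fixed = "{c \<in> core_mults n. franklin c = c}" and ?moved = "{c \<in> core_mults n. franklin c \<noteq> c}"
  have "signed_card (core_mults n) = signed_card (?fixed \<union> ?moved)"
    by (rule arg_cong[where f = signed_card]) auto
  also have "\<dots> = signed_card ?fixed + (\<Sum>c\<in>?moved. (-1) ^ sum_list c)"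
    unfolding signed_card_def using finite_core_mults[of n] by (intro sum.union_disjoint) auto
  also have "(\<Sum>c\<in>?moved. (-1::int) ^ sum_list c) = 0"
  proof (rule sum_involution_eq_0[where h = franklin])
    fix c assume "c \<in> ?moved"
    then have core: "c \<in> core_mults n" and moved: "franklin c \<noteq> c" by auto
    show "(-1::int) ^ sum_list (franklin c) + (-1) ^ sum_list c = 0"
      using franklin_core_mults(3)[OF core moved] by simp
    show "franklin c \<in> ?moved" using franklin_core_mults(1,2)[OF core] moved by auto
    show "franklin (franklin c) = c" using franklin_core_mults(2)[OF core] .
    show "franklin c \<noteq> c" by (rule moved)
  qed
  finally show ?thesis by simp
qed

lemma staircase_eq_length_iff:
  "c \<noteq> [] \<Longrightarrow> staircase c = length c \<longleftrightarrow> c = replicate (length c - 1) 1 @ [last c]"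
proof
  assume "c \<noteq> []" "staircase c = length c"
  show "c = replicate (length c - 1) 1 @ [last c]"
  proof (rule nth_equalityI)
    fix i assume "i < length c"
    then consider "Suc i < staircase c" | "i = length c - 1" using \<open>staircase c = length c\<close> by linarith
    then show "c ! i = (replicate (length c - 1) 1 @ [last c]) ! i"
      by cases (use \<open>c \<noteq> []\<close> \<open>staircase c = length c\<close> in
          \<open>auto simp: nth_append last_conv_nth nth_less_staircase\<close>)
  qed (use \<open>c \<noteq> []\<close> in simp)
next
  assume "c \<noteq> []" and c: "c = replicate (length c - 1) 1 @ [last c]"
  show "staircase c = length c"
  proof (rule staircase_eqI)
    show "c ! i = 1" if "Suc i < length c" for i
    proof -
      have "c ! i = (replicate (length c - 1) 1 @ [last c]) ! i"
        using c by (rule arg_cong[where f = "\<lambda>l. l ! i"])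
      moreover have "i < length c - 1" using that by simp
      ultimately show ?thesis by (simp add: nth_append)
    qed
  qed (use \<open>c \<noteq> []\<close> in auto)
qed

section \<open>The four families of values\<close>

lemma double_P:
  "2 * P1 t = 3 * t^2 + t + 4" "2 * P2 t = 3 * (t + 1)^2 - t - 1"
  "2 * P3 t = 3 * (t + 1)^2 - t + 3" "2 * P4 t = 3 * (t + 1)^2 + t + 1"
proof -
  have "even (3 * t^2 + t)" by simp
  then show "2 * P1 t = 3 * t^2 + t + 4" "2 * P2 t = 3 * (t + 1)^2 - t - 1"
    "2 * P3 t = 3 * (t + 1)^2 - t + 3" "2 * P4 t = 3 * (t + 1)^2 + t + 1"
    unfolding P1_def P2_def P3_def P4_def by (auto simp: power2_eq_square algebra_simps)
qed

lemma P1_Suc_eq: "P1 (t + 1) = P4 t + 2"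
  using double_P(1)[of "t + 1"] double_P(4)[of t] by simp

lemma P3_eq: "P3 t = P2 t + 2"
  using double_P(2,3)[of t] by simp

lemma ex_P1_eq_P4_plus_2: "(\<exists>t\<ge>3. x = P1 t) \<longleftrightarrow> (\<exists>t\<ge>2. x = P4 t + 2)"
proof
  assume "\<exists>t\<ge>3. x = P1 t"
  then obtain t where "3 \<le> t" "x = P1 t" by blast
  then show "\<exists>t\<ge>2. x = P4 t + 2" using P1_Suc_eq[of "t - 1"] by (intro exI[of _ "t - 1"]) auto
next
  assume "\<exists>t\<ge>2. x = P4 t + 2"
  then obtain t where "2 \<le> t" "x = P4 t + 2" by blast
  then show "\<exists>t\<ge>3. x = P1 t" by (intro exI[of _ "t + 1"]) (auto simp: P1_Suc_eq)
qed

lemma P4_mono: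
  assumes "0 \<le> s" "s \<le> t"
  shows "P4 s \<le> P4 t"
proof -
  have "(s + 1)^2 \<le> (t + 1)^2" using assms by (intro power_mono) auto
  then show ?thesis using assms double_P(4)[of s] double_P(4)[of t] by linarith
qed

lemma P_in_block:
  assumes "P \<in> {P1, P2, P3, P4}" "1 \<le> t"
  shows "P4 (t - 1) < P t \<and> P t \<le> P4 t"
  using assms double_P[of t] double_P(4)[of "t - 1"] by (auto simp: power2_eq_square algebra_simps)

lemma P_param_unique:
  assumes "P \<in> {P1, P2, P3, P4}" "Q \<in> {P1, P2, P3, P4}" "1 \<le> s" "1 \<le> t" "P s = Q t"
  shows "s = t"
proof -
  have less: False if "P \<in> {P1, P2, P3, P4}" "Q \<in> {P1, P2, P3, P4}" "1 \<le> s" "s < t" "P s = Q t"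
    for P Q s t
  proof -
    have "P s \<le> P4 s" using P_in_block[of P s] that by simp
    also have "\<dots> \<le> P4 (t - 1)" using that by (intro P4_mono) auto
    also have "\<dots> < Q t" using P_in_block[of Q t] that by simp
    finally show False using that by simp
  qed
  show ?thesis using less[of P Q s t] less[of Q P t s] assms by fastforce
qed

lemma of_bool_ex_P1:
  "(of_bool (\<exists>t\<ge>2. x = P1 t) :: int) = of_bool (x = 9) + of_bool (\<exists>t\<ge>3. x = P1 t)"
proof -
  have P1_2: "P1 2 = 9" by (simp add: P1_def)
  have "P1 t \<noteq> 9" if "3 \<le> t" for t
    using that P_param_unique[of P1 P1 t 2] P1_2 by auto
  moreover have "(\<exists>t\<ge>2. x = P1 t) \<longleftrightarrow> x = 9 \<or> (\<exists>t\<ge>3. x = P1 t)"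
  proof
    assume "\<exists>t\<ge>2. x = P1 t"
    then obtain t where "2 \<le> t" "x = P1 t" by blast
    then show "x = 9 \<or> (\<exists>t\<ge>3. x = P1 t)" using P1_2 by (cases "t = 2") (auto intro!: exI[of _ t])
  next
    assume "x = 9 \<or> (\<exists>t\<ge>3. x = P1 t)"
    then show "\<exists>t\<ge>2. x = P1 t"
    proof
      assume "\<exists>t\<ge>3. x = P1 t"
      then obtain t where "3 \<le> t" "x = P1 t" by blast
      then show ?thesis by (intro exI[of _ t]) simp
    qed (use P1_2 in \<open>intro exI[of _ 2], simp\<close>)
  qed
  ultimately show ?thesis by auto
qed

lemma P_strict_chain: "2 \<le> t \<Longrightarrow> P1 t < P2 t \<and> P2 t < P3 t \<and> P3 t < P4 t"
  using double_P[of t] by (auto simp: power2_eq_square algebra_simps)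

lemma P_values_distinct:
  assumes "2 \<le> s" "2 \<le> t"
  shows "P1 s \<noteq> P2 t" "P1 s \<noteq> P3 t" "P1 s \<noteq> P4 t"
    and "P2 s \<noteq> P3 t" "P2 s \<noteq> P4 t" "P3 s \<noteq> P4 t"
  using P_param_unique[of _ _ s t] P_strict_chain[of t] assms by fastforce+

lemma double_weight_replicate: "2 * weight (replicate k (1::nat)) = k * (k + 1)"
proof (induction k)
  case (Suc k)
  have "replicate (Suc k) (1::nat) = replicate k 1 @ [1]" by (simp add: replicate_append_same)
  then show ?case using Suc by (simp add: weight_snoc)
qed simp

lemma double_weight_replicate_snoc: "2 * weight (replicate k 1 @ [x]) = k * (k + 1) + 2 * (k + 1) * x"
  using double_weight_replicate[of k] by (simp add: weight_snoc)

lemma P4_eq_weight: "P4 (int k) = int (weight (replicate k 1 @ [k + 2]))"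
  using double_P(4)[of "int k"] double_weight_replicate_snoc[of k "k + 2"]
  by (simp add: power2_eq_square algebra_simps flip: of_nat_mult)

lemma P2_eq_weight: "P2 (int k) = int (weight (replicate k 1 @ [k + 1]))"
  using double_P(2)[of "int k"] double_weight_replicate_snoc[of k "k + 1"]
  by (simp add: power2_eq_square algebra_simps flip: of_nat_mult)

lemma core_mults_fixed_iff:
  "c \<in> core_mults n \<and> franklin c = c \<longleftrightarrow>
     (\<exists>k\<ge>2. (c = replicate k 1 @ [k + 2] \<or> c = replicate k 1 @ [k + 1]) \<and> weight c = n)"
proof
  assume "c \<in> core_mults n \<and> franklin c = c"
  then have c: "c \<in> core_mults n" and fixed: "staircase c = length c"
    "last c = length c \<or> last c = Suc (length c)"
    using franklin_core_mults(4) by auto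
  have len: "3 \<le> length c" "weight c = n" using c by (auto simp: core_mults_iff)
  then obtain k where k: "length c = Suc k" "2 \<le> k" by (cases "length c") auto
  then have "c = replicate k 1 @ [last c]"
    using fixed(1) staircase_eq_length_iff[of c] by (cases c) auto
  with fixed(2) len k
  show "\<exists>k\<ge>2. (c = replicate k 1 @ [k + 2] \<or> c = replicate k 1 @ [k + 1]) \<and> weight c = n"
    by auto
next
  assume "\<exists>k\<ge>2. (c = replicate k 1 @ [k + 2] \<or> c = replicate k 1 @ [k + 1]) \<and> weight c = n"
  then obtain k x where c: "c = replicate k 1 @ [x]" "x = k + 2 \<or> x = k + 1" "2 \<le> k" "weight c = n"
    by blast
  then have "c \<in> core_mults n" by (auto simp: core_mults_iff nth_append)
  moreover have "staircase c = length c"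
    by (rule staircase_eq_length_iff[THEN iffD2]) (use c in auto)
  ultimately show "c \<in> core_mults n \<and> franklin c = c" using c by (auto simp: franklin_core_mults(4))
qed

lemma card_P_preimage:
  assumes "P \<in> {P1, P2, P3, P4}"
  shows "finite {k::nat. 2 \<le> k \<and> P (int k) = x}"
    "card {k::nat. 2 \<le> k \<and> P (int k) = x} = of_bool (\<exists>t\<ge>2. x = P t)"
proof -
  let ?K = "{k::nat. 2 \<le> k \<and> P (int k) = x}"
  have "finite ?K \<and> card ?K = of_bool (\<exists>t\<ge>2. x = P t)"
  proof (cases "\<exists>t\<ge>2. x = P t")
    case True
    then obtain t where t: "2 \<le> t" "x = P t" by blast
    have "2 \<le> k \<and> P (int k) = x \<longleftrightarrow> k = nat t" for k
      using t P_param_unique[OF assms assms, of "int k" t] by auto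
    then have "?K = {nat t}" by blast
    then show ?thesis using True by (simp only:) simp
  next
    case False
    have "\<not> (2 \<le> k \<and> P (int k) = x)" for k
    proof
      assume "2 \<le> k \<and> P (int k) = x"
      then have "\<exists>t\<ge>2. x = P t" by (intro exI[of _ "int k"]) auto
      with False show False by blast
    qed
    then have "?K = {}" by blast
    then show ?thesis using False by (simp only:) simp
  qed
  then show "finite ?K" "card ?K = of_bool (\<exists>t\<ge>2. x = P t)" by simp_all
qed

lemma signed_card_core_mults:
  "signed_card (core_mults n) = of_bool (\<exists>t\<ge>2. int n = P4 t) - of_bool (\<exists>t\<ge>2. int n = P2 t)"
proof -
  define K4 K2 where "K4 = {k::nat. 2 \<le> k \<and> P4 (int k) = int n}"
    and "K2 = {k::nat. 2 \<le> k \<and> P2 (int k) = int n}"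
  let ?A = "(\<lambda>k. replicate k 1 @ [k + 2]) ` K4" and ?B = "(\<lambda>k. replicate k 1 @ [k + 1]) ` K2"
  have fin: "finite K4" "finite K2" using card_P_preimage(1) by (auto simp: K4_def K2_def)
  have inj: "inj_on (\<lambda>k. replicate k (1::nat) @ [k + a]) K" for a K
    by (rule inj_onI) (metis length_append_singleton length_replicate nat.inject)
  have "{c \<in> core_mults n. franklin c = c} = ?A \<union> ?B"
    using core_mults_fixed_iff[of _ n] by (auto simp: K4_def K2_def P4_eq_weight P2_eq_weight)
  then have "signed_card (core_mults n) = signed_card (?A \<union> ?B)"
    by (simp add: signed_card_core_mults_fixed)
  also have "\<dots> = signed_card ?A + signed_card ?B"
    unfolding signed_card_def using fin by (intro sum.union_disjoint) auto
  also have "signed_card ?A = int (card K4)" "signed_card ?B = - int (card K2)"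
    unfolding signed_card_def sum.reindex[OF inj] by (simp_all add: sum_list_replicate)
  ultimately show ?thesis using card_P_preimage(2) by (simp add: K4_def K2_def eq_commute[of "int n"])
qed

text \<open>
  When the largest part m of expand c occurs twice (last c = 2), lower_top c replaces both
  copies by m - 1; raise_top is the inverse operation.
\<close>

definition lower_top :: "nat list \<Rightarrow> nat list" where
  "lower_top c = map (\<lambda>i. c ! i + (if i = length c - 2 then 2 else 0)) [0..<length c - 1]"

definition raise_top :: "nat list \<Rightarrow> nat list" where
  "raise_top c = map (\<lambda>i. c ! i - (if i = length c - 1 then 2 else 0)) [0..<length c] @ [2]"

lemma length_lower_top [simp]: "length (lower_top c) = length c - 1"
  by (simp add: lower_top_def)

lemma nth_lower_top:
  "i < length c - 1 \<Longrightarrow> lower_top c ! i = c ! i + (if i = length c - 2 then 2 else 0)"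
  by (simp add: lower_top_def)

lemma length_raise_top [simp]: "length (raise_top c) = Suc (length c)"
  by (simp add: raise_top_def)

lemma nth_raise_top: "i < length c \<Longrightarrow> raise_top c ! i = c ! i - (if i = length c - 1 then 2 else 0)"
  by (simp add: raise_top_def nth_append)

lemma last_raise_top [simp]: "last (raise_top c) = 2"
  by (simp add: raise_top_def)

lemma lower_top_raise_top:
  assumes "c \<noteq> []" "2 \<le> last c"
  shows "lower_top (raise_top c) = c"
proof (rule nth_equalityI)
  fix i assume "i < length (lower_top (raise_top c))"
  then show "lower_top (raise_top c) ! i = c ! i"
    using assms by (auto simp: nth_lower_top nth_raise_top last_conv_nth)
qed simp

lemma raise_top_lower_top:
  assumes "2 \<le> length c" "last c = 2"
  shows "raise_top (lower_top c) = c"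
proof (rule nth_equalityI)
  show "length (raise_top (lower_top c)) = length c" using assms by simp
  fix i assume "i < length (raise_top (lower_top c))"
  then consider "i < length c - 1" | "i = length c - 1" using assms by fastforce
  then show "raise_top (lower_top c) ! i = c ! i"
  proof cases
    case 1
    then show ?thesis using assms by (simp add: nth_raise_top nth_lower_top numeral_2_eq_2)
  next
    case 2
    have "c \<noteq> []" using assms by auto
    then show ?thesis using 2 assms by (simp add: raise_top_def nth_append last_conv_nth)
  qed
qed

lemma weight_lower_top:
  assumes "2 \<le> length c" "last c = 2"
  shows "weight (lower_top c) + 2 = weight c"
proof -
  define m where "m = length c"
  have m: "m - 2 < m - 1" "Suc (m - 2) = m - 1" "2 * (m - 1) + 2 = 2 * m"
    using assms by (auto simp: m_def)
  have "weight (lower_top c) = (\<Sum>i<m - 1. Suc i * (c ! i + (if i = m - 2 then 2 else 0)))"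
    unfolding m_def by (simp add: lower_top_def weight_map_upt)
  also have "\<dots> = (\<Sum>i<m - 1. Suc i * c ! i) + (\<Sum>i<m - 1. Suc i * (if i = m - 2 then 2 else 0))"
    by (simp only: distrib_left sum.distrib)
  also have "\<dots> = (\<Sum>i<m - 1. Suc i * c ! i) + 2 * (m - 1)"
    using m by (simp add: if_distrib sum.delta cong: if_cong)
  finally show ?thesis
    using assms m weight_split_last[of c] by (cases c) (auto simp: m_def)
qed

lemma sum_list_lower_top:
  assumes "2 \<le> length c" "last c = 2"
  shows "sum_list (lower_top c) = sum_list c"
proof -
  define m where "m = length c"
  have "m - 2 < m - 1" using assms by (simp add: m_def)
  then have "sum_list (lower_top c) = (\<Sum>i<m - 1. c ! i) + 2"
    unfolding m_def
    by (simp add: lower_top_def sum_set_upt_conv_sum_list_nat[symmetric] atLeast0LessThan sum.distrib)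
  then show ?thesis
    using assms sum_list_split_last[of c] by (cases c) (auto simp: m_def)
qed

lemma lower_top_good_mults:
  assumes c: "c \<in> good_mults n" "last c = 2" "4 \<le> length c"
  shows "lower_top c \<in> core_mults (n - 2)"
proof -
  have c': "c ! 0 = 1" "c ! 1 = 1" "0 \<notin> set c" "weight c = n" using c by (auto simp: good_mults_def)
  have "0 < lower_top c ! i" if "i < length (lower_top c)" for i
    using nth_pos[OF c'(3), of i] that by (simp add: nth_lower_top)
  then have "0 \<notin> set (lower_top c)" by (rule zero_notin_setI)
  moreover have "lower_top c ! 0 = 1" "lower_top c ! 1 = 1" using c c' by (simp_all add: nth_lower_top)
  moreover have "3 \<le> last (lower_top c)"
  proof -
    have "0 < c ! (length c - 2)" using c by (intro nth_pos[OF c'(3)]) auto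
    then show ?thesis using c by (simp add: lower_top_def last_map numeral_2_eq_2 Suc_diff_Suc)
  qed
  moreover have "weight (lower_top c) = n - 2" using weight_lower_top[of c] c c' by simp
  ultimately show ?thesis using c by (simp add: core_mults_iff)
qed

lemma raise_top_core_mults:
  assumes d: "d \<in> core_mults m"
  shows "raise_top d \<in> good_mults (m + 2)" "last (raise_top d) = 2" "4 \<le> length (raise_top d)"
proof -
  have d': "3 \<le> length d" "d ! 0 = 1" "d ! 1 = 1" "0 \<notin> set d" "3 \<le> last d" "weight d = m"
    using d by (auto simp: core_mults_iff)
  have ne: "d \<noteq> []" using d' by auto
  have "0 < raise_top d ! i" if "i < length (raise_top d)" for i
  proof (cases "i < length d")
    case True
    then show ?thesis using nth_pos[OF d'(4) True] d'(5) ne by (auto simp: nth_raise_top last_conv_nth)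
  qed (use that in \<open>simp add: raise_top_def nth_append\<close>)
  then have "0 \<notin> set (raise_top d)" by (rule zero_notin_setI)
  moreover have "raise_top d ! 0 = 1" "raise_top d ! 1 = 1"
  proof -
    have "0 < length d" "1 < length d" "0 \<noteq> length d - 1" "1 \<noteq> length d - 1" using d' by linarith+
    then show "raise_top d ! 0 = 1" "raise_top d ! 1 = 1" using d' by (simp_all add: nth_raise_top)
  qed
  moreover have "weight (raise_top d) = m + 2"
    using weight_lower_top[of "raise_top d"] lower_top_raise_top[OF ne] d' by simp
  ultimately show "raise_top d \<in> good_mults (m + 2)" "last (raise_top d) = 2" "4 \<le> length (raise_top d)"
    using d' by (auto simp: good_mults_def)
qed

lemma good_mults_length_3: "c \<in> good_mults n \<Longrightarrow> last c = 2 \<Longrightarrow> length c = 3 \<Longrightarrow> c = [1, 1, 2]"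
  by (erule good_mults_Cons) (auto simp: length_Suc_conv numeral_3_eq_3)

lemma signed_card_good_mults:
  assumes "2 \<le> n"
  shows "signed_card (good_mults n) = signed_card (core_mults n) + signed_card (core_mults (n - 2)) + of_bool (n = 9)"
proof -
  define L L3 where "L = {c \<in> good_mults n. last c = 2 \<and> 4 \<le> length c}"
    and "L3 = {c \<in> good_mults n. last c = 2 \<and> length c = 3}"
  have split: "good_mults n = core_mults n \<union> L \<union> L3"
    by (auto simp: core_mults_def good_mults_def L_def L3_def)
  have fin: "finite (core_mults n)" "finite L" "finite L3"
    using finite_good_mults[of n] by (auto simp: core_mults_def L_def L3_def)
  have "signed_card L = signed_card (core_mults (n - 2))"
    unfolding signed_card_def
  proof (rule sum.reindex_bij_witness[where i = raise_top and j = lower_top])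
    fix c assume "c \<in> L"
    then have c: "c \<in> good_mults n" "last c = 2" "4 \<le> length c" by (auto simp: L_def)
    show "raise_top (lower_top c) = c" using c by (simp add: raise_top_lower_top)
    show "lower_top c \<in> core_mults (n - 2)" using c by (rule lower_top_good_mults)
    show "(-1) ^ sum_list (lower_top c) = (-1::int) ^ sum_list c" using c by (simp add: sum_list_lower_top)
  next
    fix d assume d: "d \<in> core_mults (n - 2)"
    then show "lower_top (raise_top d) = d"
      by (intro lower_top_raise_top) (auto simp: core_mults_iff)
    have "n - 2 + 2 = n" using assms by simp
    then show "raise_top d \<in> L" using raise_top_core_mults[OF d] by (simp add: L_def)
  qed
  moreover have "signed_card L3 = of_bool (n = 9)"
  proof -
    have "L3 \<subseteq> {[1, 1, 2]}" using good_mults_length_3 unfolding L3_def by blast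
    moreover have "[1, 1, 2] \<in> L3 \<longleftrightarrow> n = 9" by (auto simp: L3_def good_mults_def weight_Cons)
    ultimately have "L3 = (if n = 9 then {[1, 1, 2]} else {})" by auto
    then show ?thesis by (simp add: signed_card_def)
  qed
  moreover have "core_mults n \<inter> L = {}" "(core_mults n \<union> L) \<inter> L3 = {}"
    by (auto simp: core_mults_def L_def L3_def)
  ultimately show ?thesis
    unfolding split signed_card_def using fin by (simp add: sum.union_disjoint)
qed

lemma e'_minus_o':
  assumes "6 \<le> n"
  shows "int (e' n) - int (o' n) =
    of_bool (\<exists>t\<ge>2. int n = P1 t) + of_bool (\<exists>t\<ge>2. int n = P4 t)
    - of_bool (\<exists>t\<ge>2. int n = P2 t) - of_bool (\<exists>t\<ge>2. int n = P3 t)"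
proof -
  have n2: "int (n - 2) = P t \<longleftrightarrow> int n = P t + 2" for P :: "int \<Rightarrow> int" and t
    using assms by auto
  have "int (e' n) - int (o' n) = signed_card (core_mults n) + signed_card (core_mults (n - 2)) + of_bool (n = 9)"
    using assms by (simp add: e'_minus_o'_eq_signed_card signed_card_good_mults)
  also have "signed_card (core_mults (n - 2)) =
      of_bool (\<exists>t\<ge>3. int n = P1 t) - of_bool (\<exists>t\<ge>2. int n = P3 t)"
    unfolding signed_card_core_mults n2 ex_P1_eq_P4_plus_2[symmetric] P3_eq[symmetric] ..
  finally show ?thesis using of_bool_ex_P1[of "int n"] signed_card_core_mults[of n] by simp
qed

theorem corollary4p9:
  fixes n :: nat
  assumes "n \<ge> 6"
  shows "((\<forall>t::int. t \<ge> 2 \<longrightarrow> int n \<notin> {P1 t, P2 t, P3 t, P4 t}) \<longrightarrow> e' n = o' n)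
       \<and> ((\<exists>t::int. t \<ge> 2 \<and> (int n = P1 t \<or> int n = P4 t)) \<longrightarrow> e' n = o' n + 1)
       \<and> ((\<exists>t::int. t \<ge> 2 \<and> (int n = P2 t \<or> int n = P3 t)) \<longrightarrow> int (e' n) = int (o' n) - 1)"
proof -
  define r1 r2 r3 r4 where "r1 \<longleftrightarrow> (\<exists>t\<ge>2. int n = P1 t)" and "r2 \<longleftrightarrow> (\<exists>t\<ge>2. int n = P2 t)"
    and "r3 \<longleftrightarrow> (\<exists>t\<ge>2. int n = P3 t)" and "r4 \<longleftrightarrow> (\<exists>t\<ge>2. int n = P4 t)"
  have count: "int (e' n) - int (o' n) = of_bool r1 + of_bool r4 - of_bool r2 - of_bool r3"
    unfolding r1_def r2_def r3_def r4_def by (rule e'_minus_o'[OF assms])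
  have "\<not> (r1 \<and> r2)" "\<not> (r1 \<and> r3)" "\<not> (r1 \<and> r4)" "\<not> (r2 \<and> r3)" "\<not> (r2 \<and> r4)" "\<not> (r3 \<and> r4)"
    unfolding r1_def r2_def r3_def r4_def using P_values_distinct by metis+
  moreover have "(\<forall>t::int. t \<ge> 2 \<longrightarrow> int n \<notin> {P1 t, P2 t, P3 t, P4 t}) \<longleftrightarrow> \<not> (r1 \<or> r2 \<or> r3 \<or> r4)"
    "(\<exists>t::int. t \<ge> 2 \<and> (int n = P1 t \<or> int n = P4 t)) \<longleftrightarrow> r1 \<or> r4"
    "(\<exists>t::int. t \<ge> 2 \<and> (int n = P2 t \<or> int n = P3 t)) \<longleftrightarrow> r2 \<or> r3"
    unfolding r1_def r2_def r3_def r4_def by blast+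
  ultimately show ?thesis using count by auto
qed

end
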